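(* Let $(X,\|\cdot\|_X)$ be a Banach space and $\mathcal{K}\subset X$. Then $\mathcal{K}$ is totally bounded if and only if for every $n\ge1$ one has $\lim_{\gamma\to\infty}d_n^\gamma(\mathcal{K})_X=0$.
   Context: $\mathcal{K}$ is totally bounded if for every $\varepsilon>0$ it is covered by finitely many closed balls of radius $\varepsilon$. For $k\ge1$ and a norm $\|\cdot\|_{Y_k}$ on $\mathbb{R}^k$ let $B_{Y_k}=\{y\in\mathbb{R}^k:\|y\|_{Y_k}\le1\}$. For $\gamma\ge0$, the fixed Lipschitz width is $d^\gamma(\mathcal{K},Y_k)_X=\inf_{\Phi}\sup_{f\in\mathcal{K}}\inf_{y\in B_{Y_k}}\|f-\Phi(y)\|_X\in[0,\infty]$, the infimum being over all maps $\Phi:B_{Y_k}\to X$ with $\|\Phi(y)-\Phi(y')\|_X\le\gamma\|y-y'\|_{Y_k}$ for all $y,y'\in B_{Y_k}$. The Lipschitz width is $d_n^\gamma(\mathcal{K})_X=\inf_{1\le k\le n}\inf_{\|\cdot\|_{Y_k}}d^\gamma(\mathcal{K},Y_k)_X$, where the inner infimum is over all norms on $\mathbb{R}^k$. *)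

theory Defs
  imports "HOL-Analysis.Analysis"
begin

definition totally_bounded_cb :: "'a::metric_space set \<Rightarrow> bool" where
  "totally_bounded_cb K \<longleftrightarrow>
     (\<forall>\<epsilon>>0. \<exists>F. finite F \<and> K \<subseteq> (\<Union>c\<in>F. cball c \<epsilon>))"

text \<open>R^k is represented as the vectors in nat => real supported in {..<k}.\<close>
definition Rk :: "nat \<Rightarrow> (nat \<Rightarrow> real) set" where
  "Rk k = {y. \<forall>i\<ge>k. y i = 0}"

definition is_norm_on_Rk :: "nat \<Rightarrow> ((nat \<Rightarrow> real) \<Rightarrow> real) \<Rightarrow> bool" where
  "is_norm_on_Rk k N \<longleftrightarrow>
     (\<forall>y\<in>Rk k. 0 \<le> N y \<and> (N y = 0 \<longleftrightarrow> y = (\<lambda>i. 0))) \<and>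
     (\<forall>y\<in>Rk k. \<forall>c::real. N (\<lambda>i. c * y i) = \<bar>c\<bar> * N y) \<and>
     (\<forall>y\<in>Rk k. \<forall>z\<in>Rk k. N (\<lambda>i. y i + z i) \<le> N y + N z)"

definition unit_ball_Rk :: "nat \<Rightarrow> ((nat \<Rightarrow> real) \<Rightarrow> real) \<Rightarrow> (nat \<Rightarrow> real) set" where
  "unit_ball_Rk k N = {y \<in> Rk k. N y \<le> 1}"

definition fixed_lip_width ::
  "real \<Rightarrow> 'a::real_normed_vector set \<Rightarrow> nat \<Rightarrow> ((nat \<Rightarrow> real) \<Rightarrow> real) \<Rightarrow> ennreal" where
  "fixed_lip_width \<gamma> K k N =
     (INF \<Phi>\<in>{\<Phi> :: (nat \<Rightarrow> real) \<Rightarrow> 'a.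
              \<forall>y\<in>unit_ball_Rk k N. \<forall>y'\<in>unit_ball_Rk k N.
                 norm (\<Phi> y - \<Phi> y') \<le> \<gamma> * N (\<lambda>i. y i - y' i)}.
        (SUP f\<in>K. (INF y\<in>unit_ball_Rk k N. ennreal (norm (f - \<Phi> y)))))"

definition lip_width :: "nat \<Rightarrow> real \<Rightarrow> 'a::real_normed_vector set \<Rightarrow> ennreal" where
  "lip_width n \<gamma> K =
     (INF kN\<in>{(k, N). 1 \<le> k \<and> k \<le> n \<and> is_norm_on_Rk k N}.
        fixed_lip_width \<gamma> K (fst kN) (snd kN))"

end

theory Submission
  imports Defs
begin

text \<open>Already one-dimensional parameter spaces suffice in both directions, and
  \<open>lip_width n \<le> lip_width 1\<close> for \<open>n \<ge> 1\<close>. If \<open>K\<close> is totally bounded, a polygonal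
  curve through an \<open>\<epsilon>\<close>-net of \<open>K\<close>, parametrised by the unit ball \<open>[-1, 1]\<close> of
  \<open>(\<real>, \<bar>\<cdot>\<bar>)\<close>, is Lipschitz and approximates \<open>K\<close> to within \<open>\<epsilon>\<close>; so \<open>lip_width 1 \<gamma> K \<le> \<epsilon>\<close>
  once \<open>\<gamma>\<close> exceeds its Lipschitz constant. Conversely, every norm on \<open>\<real>\<close> is a multiple
  of the absolute value, so a Lipschitz image of its unit ball is a continuous image of
  a compact interval, hence compact. If \<open>lip_width 1 \<gamma> K < \<epsilon>\<close>, then \<open>K\<close> lies in the
  \<open>\<epsilon>\<close>-neighbourhood of such a compact set and is covered by finitely many \<open>2\<epsilon>\<close>-balls.\<close>

lemma tendsto_0_ennreal_iff_eventually_le: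
  fixes f :: "'a \<Rightarrow> ennreal"
  shows "(f \<longlongrightarrow> 0) F \<longleftrightarrow> (\<forall>\<epsilon>>0. eventually (\<lambda>x. f x \<le> ennreal \<epsilon>) F)"
proof
  assume lim: "(f \<longlongrightarrow> 0) F"
  show "\<forall>\<epsilon>>0. eventually (\<lambda>x. f x \<le> ennreal \<epsilon>) F"
  proof (intro allI impI)
    fix \<epsilon> :: real
    assume "\<epsilon> > 0"
    then have "eventually (\<lambda>x. f x < ennreal \<epsilon>) F"
      using order_tendstoD(2)[OF lim] by simp
    then show "eventually (\<lambda>x. f x \<le> ennreal \<epsilon>) F"
      by (rule eventually_mono) simp
  qed
next
  assume le: "\<forall>\<epsilon>>0. eventually (\<lambda>x. f x \<le> ennreal \<epsilon>) F"
  show "(f \<longlongrightarrow> 0) F"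
  proof (rule order_tendstoI)
    fix a :: ennreal
    assume "0 < a"
    then obtain r where r: "0 < ennreal (real_of_rat r)" "ennreal (real_of_rat r) < a"
      using ennreal_rat_dense by blast
    then have "eventually (\<lambda>x. f x \<le> ennreal (real_of_rat r)) F"
      using le by (simp add: ennreal_less_iff)
    then show "eventually (\<lambda>x. f x < a) F"
      using r(2) by (elim eventually_mono) (rule le_less_trans)
  qed simp
qed

definition polygonal_curve :: "'a::real_normed_vector list \<Rightarrow> real \<Rightarrow> 'a" where
  "polygonal_curve cs t =
     cs!0 + (\<Sum>j<length cs - 1. max 0 (min 1 (t - real j)) *\<^sub>R (cs!Suc j - cs!j))"

lemma polygonal_curve_nth:
  assumes "i < length cs"
  shows "polygonal_curve cs (real i) = cs!i"
proof -
  have "(\<Sum>j<length cs - 1. max 0 (min 1 (real i - real j)) *\<^sub>R (cs!Suc j - cs!j))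
      = (\<Sum>j\<in>{..<length cs - 1} \<inter> {j. j < i}. cs!Suc j - cs!j)"
    by (simp add: sum.inter_restrict) (rule sum.cong; simp)
  also have "{..<length cs - 1} \<inter> {j. j < i} = {..<i}"
    using assms by auto
  also have "(\<Sum>j<i. cs!Suc j - cs!j) = cs!i - cs!0"
    by (rule sum_lessThan_telescope)
  finally show ?thesis
    by (simp add: polygonal_curve_def)
qed

lemma lipschitz_polygonal_curve:
  "(\<Sum>j<length cs - 1. norm (cs!Suc j - cs!j))-lipschitz_on UNIV (polygonal_curve cs)"
proof (rule lipschitz_onI)
  fix s t :: real
  let ?w = "\<lambda>j t. max 0 (min 1 (t - real j))"
  have "polygonal_curve cs s - polygonal_curve cs t
      = (\<Sum>j<length cs - 1. (?w j s - ?w j t) *\<^sub>R (cs!Suc j - cs!j))"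
    by (simp add: polygonal_curve_def sum_subtractf[symmetric] scaleR_diff_left)
  also have "norm \<dots> \<le> (\<Sum>j<length cs - 1. norm ((?w j s - ?w j t) *\<^sub>R (cs!Suc j - cs!j)))"
    by (rule norm_sum)
  also have "\<dots> \<le> (\<Sum>j<length cs - 1. \<bar>s - t\<bar> * norm (cs!Suc j - cs!j))"
  proof (rule sum_mono)
    fix j
    have "\<bar>?w j s - ?w j t\<bar> \<le> \<bar>s - t\<bar>"
      by linarith
    then show "norm ((?w j s - ?w j t) *\<^sub>R (cs!Suc j - cs!j)) \<le> \<bar>s - t\<bar> * norm (cs!Suc j - cs!j)"
      by (simp add: mult_right_mono)
  qed
  also have "\<dots> = \<bar>s - t\<bar> * (\<Sum>j<length cs - 1. norm (cs!Suc j - cs!j))"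
    by (rule sum_distrib_left[symmetric])
  finally show "dist (polygonal_curve cs s) (polygonal_curve cs t)
      \<le> (\<Sum>j<length cs - 1. norm (cs!Suc j - cs!j)) * dist s t"
    by (simp add: dist_norm dist_real_def mult.commute)
qed (simp add: sum_nonneg)

lemma finite_set_in_lipschitz_curve_image:
  fixes F :: "'a::real_normed_vector set"
  assumes "finite F"
  obtains L and h :: "real \<Rightarrow> 'a" where "L-lipschitz_on UNIV h" and "F \<subseteq> h ` {0..1}"
proof -
  obtain xs where xs: "set xs = F"
    using assms finite_list by blast
  \<comment> \<open>\<open>0\<close> is prepended only so that \<open>cs\<close> is nonempty even when \<open>F = {}\<close>.\<close>
  define cs where "cs = 0 # xs"
  define m where "m = real (length xs)"
  define h where "h t = polygonal_curve cs (m * t)" for t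
  define L where "L = (\<Sum>j<length cs - 1. norm (cs!Suc j - cs!j))"
  have "(L * (\<bar>m\<bar> * 1))-lipschitz_on UNIV h"
    unfolding h_def
    by (intro lipschitz_on_compose2 lipschitz_on_cmult_real lipschitz_on_id
        lipschitz_on_subset[OF lipschitz_polygonal_curve[of cs, folded L_def]]) simp
  moreover have "F \<subseteq> h ` {0..1}"
  proof
    fix c
    assume "c \<in> F"
    then obtain i where i: "i < length xs" "c = xs!i"
      using xs by (auto simp: in_set_conv_nth)
    then have "m > 0"
      by (auto simp: m_def)
    then have "h (real (Suc i) / m) = polygonal_curve cs (real (Suc i))"
      by (simp add: h_def)
    also have "\<dots> = c"
      using i polygonal_curve_nth[of "Suc i" cs] by (simp add: cs_def)
    finally have "h (real (Suc i) / m) = c" .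
    moreover have "real (Suc i) / m \<in> {0..1}"
      using i \<open>m > 0\<close> by (auto simp: m_def divide_le_eq_1)
    ultimately show "c \<in> h ` {0..1}"
      by blast
  qed
  ultimately show thesis
    by (rule that)
qed

lemma Rk_1_eq: "y \<in> Rk 1 \<Longrightarrow> y = (\<lambda>i. if i = 0 then y 0 else 0)"
  by (auto simp: Rk_def fun_eq_iff)

lemma is_norm_on_Rk_1_abs: "is_norm_on_Rk 1 (\<lambda>y. \<bar>y 0\<bar>)"
proof -
  have "y = (\<lambda>i. 0)" if "y \<in> Rk 1" "y 0 = 0" for y
    using that by (metis Rk_1_eq)
  then show ?thesis
    by (auto simp: is_norm_on_Rk_def abs_mult)
qed

lemma is_norm_on_Rk_1_eq_scaled_abs:
  assumes "is_norm_on_Rk 1 N"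
  obtains c where "c > 0" and "\<And>y. y \<in> Rk 1 \<Longrightarrow> N y = c * \<bar>y 0\<bar>"
proof
  define e :: "nat \<Rightarrow> real" where "e i = (if i = 0 then 1 else 0)" for i
  have e: "e \<in> Rk 1" "e \<noteq> (\<lambda>i. 0)"
    by (auto simp: e_def Rk_def fun_eq_iff)
  then show "N e > 0"
    using assms unfolding is_norm_on_Rk_def by (metis order_le_less)
  fix y
  assume "y \<in> Rk 1"
  then have "y = (\<lambda>i. y 0 * e i)"
    by (subst Rk_1_eq) (auto simp: e_def)
  then show "N y = N e * \<bar>y 0\<bar>"
    using assms e(1) unfolding is_norm_on_Rk_def by (metis mult.commute)
qed

lemma lip_width_le_if_approximated_by_lipschitz_curve:
  fixes K :: "'a::real_normed_vector set" and h :: "real \<Rightarrow> 'a"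
  assumes n: "n \<ge> 1" and h: "L-lipschitz_on {-1..1} h" and "L \<le> \<gamma>"
    and K: "K \<subseteq> (\<Union>t\<in>{-1..1}. cball (h t) \<epsilon>)"
  shows "lip_width n \<gamma> K \<le> ennreal \<epsilon>"
proof -
  let ?N = "\<lambda>y::nat \<Rightarrow> real. \<bar>y 0\<bar>"
  let ?\<Phi> = "\<lambda>y::nat \<Rightarrow> real. h (y 0)"
  have lip: "norm (?\<Phi> y - ?\<Phi> y') \<le> \<gamma> * ?N (\<lambda>i. y i - y' i)"
    if "y \<in> unit_ball_Rk 1 ?N" "y' \<in> unit_ball_Rk 1 ?N" for y y'
  proof -
    have "norm (?\<Phi> y - ?\<Phi> y') \<le> L * \<bar>y 0 - y' 0\<bar>"
      using lipschitz_onD[OF h, of "y 0" "y' 0"] that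
      by (simp add: unit_ball_Rk_def dist_norm dist_real_def abs_le_iff)
    also have "\<dots> \<le> \<gamma> * \<bar>y 0 - y' 0\<bar>"
      using \<open>L \<le> \<gamma>\<close> by (simp add: mult_right_mono)
    finally show ?thesis .
  qed
  have approx: "(INF y\<in>unit_ball_Rk 1 ?N. ennreal (norm (f - ?\<Phi> y))) \<le> ennreal \<epsilon>"
    if "f \<in> K" for f
  proof -
    obtain t where t: "t \<in> {-1..1}" "norm (f - h t) \<le> \<epsilon>"
      using K \<open>f \<in> K\<close> by (auto simp: dist_norm norm_minus_commute)
    have "(\<lambda>i. if i = 0 then t else 0) \<in> unit_ball_Rk 1 ?N"
      using t(1) by (auto simp: unit_ball_Rk_def Rk_def)
    then show ?thesis
      by (rule INF_lower2) (simp add: t(2) ennreal_leI)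
  qed
  have "lip_width n \<gamma> K \<le> fixed_lip_width \<gamma> K 1 ?N"
    unfolding lip_width_def using n is_norm_on_Rk_1_abs
    by (intro INF_lower2[where i="(1, ?N)"]) auto
  also have "\<dots> \<le> ennreal \<epsilon>"
    unfolding fixed_lip_width_def using lip approx
    by (intro INF_lower2[where i="?\<Phi>"] SUP_least) auto
  finally show ?thesis .
qed

lemma eventually_lip_width_le:
  fixes K :: "'a::real_normed_vector set"
  assumes "totally_bounded_cb K" and "n \<ge> 1" and "\<epsilon> > 0"
  shows "eventually (\<lambda>\<gamma>. lip_width n \<gamma> K \<le> ennreal \<epsilon>) at_top"
proof -
  obtain F where F: "finite F" "K \<subseteq> (\<Union>c\<in>F. cball c \<epsilon>)"
    using assms(1,3) unfolding totally_bounded_cb_def by blast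
  obtain L and h :: "real \<Rightarrow> 'a" where h: "L-lipschitz_on UNIV h" and Fh: "F \<subseteq> h ` {0..1}"
    using finite_set_in_lipschitz_curve_image[OF F(1)] .
  have "K \<subseteq> (\<Union>t\<in>{-1..1}. cball (h t) \<epsilon>)"
    using F(2) Fh by fastforce
  then show ?thesis
    using assms(2) lipschitz_on_subset[OF h]
    by (intro eventually_at_top_linorderI[of L] lip_width_le_if_approximated_by_lipschitz_curve)
      auto
qed

lemma compact_lipschitz_image_unit_ball_Rk_1:
  assumes N: "is_norm_on_Rk 1 N"
    and lip: "\<forall>y\<in>unit_ball_Rk 1 N. \<forall>y'\<in>unit_ball_Rk 1 N.
                norm (\<Phi> y - \<Phi> y') \<le> \<gamma> * N (\<lambda>i. y i - y' i)"
  shows "compact (\<Phi> ` unit_ball_Rk 1 N)"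
proof -
  obtain c where c: "c > 0" "\<And>y. y \<in> Rk 1 \<Longrightarrow> N y = c * \<bar>y 0\<bar>"
    using is_norm_on_Rk_1_eq_scaled_abs[OF N] by blast
  define e :: "real \<Rightarrow> nat \<Rightarrow> real" where "e t = (\<lambda>i. if i = 0 then t else 0)" for t
  have eR: "e t \<in> Rk 1" for t
    by (simp add: e_def Rk_def)
  have Ne: "N (e t) = c * \<bar>t\<bar>" for t
    using c(2)[OF eR] by (simp add: e_def)
  let ?I = "{-1/c..1/c}"
  have in_I: "t \<in> ?I \<longleftrightarrow> c * \<bar>t\<bar> \<le> 1" for t
  proof -
    have "t \<in> ?I \<longleftrightarrow> \<bar>t\<bar> \<le> 1/c"
      by auto
    also have "\<dots> \<longleftrightarrow> c * \<bar>t\<bar> \<le> 1"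
      using c(1) by (simp add: field_simps)
    finally show ?thesis .
  qed
  have ball_eq: "unit_ball_Rk 1 N = e ` ?I"
  proof
    show "unit_ball_Rk 1 N \<subseteq> e ` ?I"
    proof
      fix y
      assume y: "y \<in> unit_ball_Rk 1 N"
      then have "y = e (y 0)"
        using Rk_1_eq by (auto simp: unit_ball_Rk_def e_def)
      moreover have "y 0 \<in> ?I"
        using y c(2)[of y] in_I by (simp add: unit_ball_Rk_def)
      ultimately show "y \<in> e ` ?I"
        by blast
    qed
    show "e ` ?I \<subseteq> unit_ball_Rk 1 N"
      using eR Ne in_I by (auto simp: unit_ball_Rk_def)
  qed
  have "(\<bar>\<gamma>\<bar> * c)-lipschitz_on ?I (\<lambda>t. \<Phi> (e t))"
  proof (rule lipschitz_onI)
    fix s t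
    assume "s \<in> ?I" "t \<in> ?I"
    then have "norm (\<Phi> (e s) - \<Phi> (e t)) \<le> \<gamma> * N (\<lambda>i. e s i - e t i)"
      using lip unfolding ball_eq by blast
    also have "(\<lambda>i. e s i - e t i) = e (s - t)"
      by (simp add: e_def fun_eq_iff)
    also have "\<gamma> * N (e (s - t)) \<le> \<bar>\<gamma>\<bar> * c * \<bar>s - t\<bar>"
      using c(1) by (simp add: Ne mult_right_mono)
    finally show "dist (\<Phi> (e s)) (\<Phi> (e t)) \<le> \<bar>\<gamma>\<bar> * c * dist s t"
      by (simp add: dist_norm dist_real_def)
  qed (use c(1) in simp)
  then have "compact ((\<lambda>t. \<Phi> (e t)) ` ?I)"
    by (intro compact_continuous_image lipschitz_on_continuous_on compact_Icc)
  then show ?thesis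
    unfolding ball_eq image_image .
qed

lemma near_compact_if_lip_width_1_less:
  fixes K :: "'a::real_normed_vector set"
  assumes "lip_width 1 \<gamma> K < ennreal \<epsilon>"
  shows "\<exists>C. compact C \<and> K \<subseteq> (\<Union>c\<in>C. ball c \<epsilon>)"
proof -
  obtain N where N: "is_norm_on_Rk 1 N" and "fixed_lip_width \<gamma> K 1 N < ennreal \<epsilon>"
    using assms unfolding lip_width_def INF_less_iff by auto
  then obtain \<Phi> :: "(nat \<Rightarrow> real) \<Rightarrow> 'a"
    where lip: "\<forall>y\<in>unit_ball_Rk 1 N. \<forall>y'\<in>unit_ball_Rk 1 N.
                  norm (\<Phi> y - \<Phi> y') \<le> \<gamma> * N (\<lambda>i. y i - y' i)"
      and approx: "(SUP f\<in>K. INF y\<in>unit_ball_Rk 1 N. ennreal (norm (f - \<Phi> y))) < ennreal \<epsilon>"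
    unfolding fixed_lip_width_def INF_less_iff by blast
  have "K \<subseteq> (\<Union>c\<in>\<Phi> ` unit_ball_Rk 1 N. ball c \<epsilon>)"
  proof
    fix f
    assume "f \<in> K"
    then obtain y where "y \<in> unit_ball_Rk 1 N" "ennreal (norm (f - \<Phi> y)) < ennreal \<epsilon>"
      using SUP_lessD[OF approx] unfolding INF_less_iff by blast
    then show "f \<in> (\<Union>c\<in>\<Phi> ` unit_ball_Rk 1 N. ball c \<epsilon>)"
      by (auto simp: ennreal_less_iff dist_norm norm_minus_commute)
  qed
  then show ?thesis
    using compact_lipschitz_image_unit_ball_Rk_1[OF N lip] by blast
qed

lemma totally_bounded_cb_if_near_compact:
  fixes K :: "'a::metric_space set"
  assumes "\<And>\<epsilon>. \<epsilon> > 0 \<Longrightarrow> \<exists>C. compact C \<and> K \<subseteq> (\<Union>c\<in>C. ball c \<epsilon>)"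
  shows "totally_bounded_cb K"
  unfolding totally_bounded_cb_def
proof (intro allI impI)
  fix \<epsilon> :: real
  assume "\<epsilon> > 0"
  then obtain C where C: "compact C" "K \<subseteq> (\<Union>c\<in>C. ball c (\<epsilon>/2))"
    using assms[of "\<epsilon>/2"] by auto
  then obtain F where F: "finite F" "C \<subseteq> (\<Union>x\<in>F. ball x (\<epsilon>/2))"
    using \<open>\<epsilon> > 0\<close> unfolding compact_eq_totally_bounded by (meson half_gt_zero)
  have "K \<subseteq> (\<Union>x\<in>F. cball x \<epsilon>)"
  proof
    fix f
    assume "f \<in> K"
    then obtain c where "c \<in> C" "dist c f < \<epsilon>/2"
      using C(2) by auto
    moreover obtain x where "x \<in> F" "dist x c < \<epsilon>/2"
      using F(2) \<open>c \<in> C\<close> by auto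
    ultimately show "f \<in> (\<Union>x\<in>F. cball x \<epsilon>)"
      using dist_triangle[of x f c] by force
  qed
  with F(1) show "\<exists>F. finite F \<and> K \<subseteq> (\<Union>x\<in>F. cball x \<epsilon>)"
    by blast
qed

theorem lemma2p6:
  fixes K :: "'a::banach set"
  shows "totally_bounded_cb K \<longleftrightarrow>
           (\<forall>n\<ge>1. ((\<lambda>\<gamma>. lip_width n \<gamma> K) \<longlongrightarrow> 0) at_top)"
proof
  assume "totally_bounded_cb K"
  then show "\<forall>n\<ge>1. ((\<lambda>\<gamma>. lip_width n \<gamma> K) \<longlongrightarrow> 0) at_top"
    by (simp add: tendsto_0_ennreal_iff_eventually_le eventually_lip_width_le)
next
  assume "\<forall>n\<ge>1. ((\<lambda>\<gamma>. lip_width n \<gamma> K) \<longlongrightarrow> 0) at_top"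
  then have lim: "\<forall>\<epsilon>>0. eventually (\<lambda>\<gamma>. lip_width 1 \<gamma> K \<le> ennreal \<epsilon>) at_top"
    by (simp add: tendsto_0_ennreal_iff_eventually_le)
  show "totally_bounded_cb K"
  proof (rule totally_bounded_cb_if_near_compact)
    fix \<epsilon> :: real
    assume "\<epsilon> > 0"
    then obtain \<gamma> where "lip_width 1 \<gamma> K \<le> ennreal (\<epsilon>/2)"
      using lim eventually_happens'[OF trivial_limit_at_top_linorder] by (meson half_gt_zero)
    also have "\<dots> < ennreal \<epsilon>"
      using \<open>\<epsilon> > 0\<close> by (simp add: ennreal_less_iff)
    finally show "\<exists>C. compact C \<and> K \<subseteq> (\<Union>c\<in>C. ball c \<epsilon>)"
      by (rule near_compact_if_lip_width_1_less)
  qed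
qed

end
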